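(* Let $R$ be an associative ring with identity and $M$ a left $R$-module which is projective in $\sigma[M]$. Suppose that for every fully invariant submodule $N\leq M$ the factor module $M/N$ has finite uniform dimension. Then the topological space $LgSpec(M)$ is weakly scattered.
   Context: $\Lambda^{fi}(M)$ is the set of fully invariant submodules of $M$. For $N,L\leq M$, $N_ML=\sum\{f(N)\mid f\in\mathrm{Hom}_R(M,L)\}$. $LgSpec(M)$ is the set of submodules $P\neq M$ such that for all $N,L\in\Lambda^{fi}(M)$, $N_ML\subseteq P$ implies $N\subseteq P$ or $L\subseteq P$, with the topology whose open sets are $\{P\in LgSpec(M)\mid N\nsubseteq P\}$, $N\in\Lambda^{fi}(M)$. A topological space $S$ is weakly scattered if every non-empty closed subset $F$ contains a point $x$ that is weakly isolated in $F$, i.e. there is an open set $U$ with $x\in U\cap F\subseteq\overline{\{x\}}$. *)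

theory Defs
  imports "HOL-Algebra.Module" "HOL-Analysis.Abstract_Topology"
begin

(* Left modules over an arbitrary (not necessarily commutative) associative ring
   with identity.  (HOL-Algebra's locale module requires a commutative ring.) *)
definition lmodule :: "'r ring \<Rightarrow> ('r, 'a) module \<Rightarrow> bool" where
  "lmodule R M \<longleftrightarrow> ring R \<and> abelian_group M \<and>
     (\<forall>r\<in>carrier R. \<forall>x\<in>carrier M. smult M r x \<in> carrier M) \<and>
     (\<forall>r\<in>carrier R. \<forall>s\<in>carrier R. \<forall>x\<in>carrier M.
        smult M (add R r s) x = add M (smult M r x) (smult M s x)) \<and>
     (\<forall>r\<in>carrier R. \<forall>x\<in>carrier M. \<forall>y\<in>carrier M.
        smult M r (add M x y) = add M (smult M r x) (smult M r y)) \<and>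
     (\<forall>r\<in>carrier R. \<forall>s\<in>carrier R. \<forall>x\<in>carrier M.
        smult M (mult R r s) x = smult M r (smult M s x)) \<and>
     (\<forall>x\<in>carrier M. smult M (one R) x = x)"

definition lsubmodule :: "'r ring \<Rightarrow> ('r, 'a) module \<Rightarrow> 'a set \<Rightarrow> bool" where
  "lsubmodule R M N \<longleftrightarrow> N \<subseteq> carrier M \<and> zero M \<in> N \<and>
     (\<forall>x\<in>N. \<forall>y\<in>N. add M x y \<in> N) \<and>
     (\<forall>x\<in>N. a_inv M x \<in> N) \<and>
     (\<forall>r\<in>carrier R. \<forall>x\<in>N. smult M r x \<in> N)"

text \<open>Submodule generated by a subset; the sum of a family of submodules is the
  submodule generated by their union.\<close>
definition lspan :: "'r ring \<Rightarrow> ('r, 'a) module \<Rightarrow> 'a set \<Rightarrow> 'a set" where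
  "lspan R M S = \<Inter>{N. lsubmodule R M N \<and> S \<subseteq> N}"

definition lhom :: "'r ring \<Rightarrow> ('r, 'a) module \<Rightarrow> ('r, 'b) module \<Rightarrow> ('a \<Rightarrow> 'b) set" where
  "lhom R M N = {f. (\<forall>x\<in>carrier M. f x \<in> carrier N) \<and>
     (\<forall>x\<in>carrier M. \<forall>y\<in>carrier M. f (add M x y) = add N (f x) (f y)) \<and>
     (\<forall>r\<in>carrier R. \<forall>x\<in>carrier M. f (smult M r x) = smult N r (f x))}"

definition dsum :: "'r ring \<Rightarrow> ('r, 'a) module \<Rightarrow> 'i set \<Rightarrow> ('r, 'i \<Rightarrow> 'a) module" where
  "dsum R M I = \<lparr> carrier = {f. (\<forall>i\<in>I. f i \<in> carrier M) \<and> (\<forall>i. i \<notin> I \<longrightarrow> f i = zero M)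
                               \<and> finite {i. f i \<noteq> zero M}},
                  mult = undefined, one = undefined,
                  zero = (\<lambda>i. zero M),
                  add = (\<lambda>f g i. add M (f i) (g i)),
                  smult = (\<lambda>r f i. smult M r (f i)) \<rparr>"

text \<open>Index sets taken in the type 'b \<times> nat, which is
  large enough up to isomorphism.\<close>
definition in_sigma :: "'r ring \<Rightarrow> ('r, 'a) module \<Rightarrow> ('r, 'b) module \<Rightarrow> bool" where
  "in_sigma R M N \<longleftrightarrow> lmodule R N \<and>
     (\<exists>(I :: ('b \<times> nat) set) U h. lsubmodule R (dsum R M I) U \<and>
        h \<in> lhom R ((dsum R M I)\<lparr>carrier := U\<rparr>) N \<and> h ` U = carrier N)"

text \<open>The test modules range over a fixed type which is large
  enough up to isomorphism.\<close>
definition projective_in_sigma :: "'r ring \<Rightarrow> ('r, 'a) module \<Rightarrow> bool" where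
  "projective_in_sigma R M \<longleftrightarrow>
     (\<forall>(N :: ('r, ('a \<times> nat) \<Rightarrow> 'a) module) (L :: ('r, ('a \<times> nat) \<Rightarrow> 'a) module) g f.
        in_sigma R M N \<and> in_sigma R M L \<and> g \<in> lhom R N L \<and> g ` carrier N = carrier L \<and>
        f \<in> lhom R M L \<longrightarrow> (\<exists>h\<in>lhom R M N. \<forall>x\<in>carrier M. g (h x) = f x))"

definition fully_invariant :: "'r ring \<Rightarrow> ('r, 'a) module \<Rightarrow> 'a set \<Rightarrow> bool" where
  "fully_invariant R M N \<longleftrightarrow> lsubmodule R M N \<and> (\<forall>f\<in>lhom R M M. f ` N \<subseteq> N)"

definition NML :: "'r ring \<Rightarrow> ('r, 'a) module \<Rightarrow> 'a set \<Rightarrow> 'a set \<Rightarrow> 'a set" where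
  "NML R M N L = lspan R M (\<Union>{f ` N | f. f \<in> lhom R M (M\<lparr>carrier := L\<rparr>)})"

definition LgSpec :: "'r ring \<Rightarrow> ('r, 'a) module \<Rightarrow> 'a set set" where
  "LgSpec R M = {P. lsubmodule R M P \<and> P \<noteq> carrier M \<and>
     (\<forall>N L. fully_invariant R M N \<and> fully_invariant R M L \<and> NML R M N L \<subseteq> P
            \<longrightarrow> N \<subseteq> P \<or> L \<subseteq> P)}"

definition LgSpec_top :: "'r ring \<Rightarrow> ('r, 'a) module \<Rightarrow> 'a set topology" where
  "LgSpec_top R M = topology (\<lambda>U. \<exists>N. fully_invariant R M N \<and> U = {P \<in> LgSpec R M. \<not> N \<subseteq> P})"

definition quot_mod :: "'r ring \<Rightarrow> ('r, 'a) module \<Rightarrow> 'a set \<Rightarrow> ('r, 'a set) module" where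
  "quot_mod R M N = \<lparr> carrier = {{add M a n | n. n \<in> N} | a. a \<in> carrier M},
     mult = undefined, one = undefined,
     zero = N,
     add = (\<lambda>X Y. {add M x y | x y. x \<in> X \<and> y \<in> Y}),
     smult = (\<lambda>r X. {add M (smult M r x) n | x n. x \<in> X \<and> n \<in> N}) \<rparr>"

definition finite_udim :: "'r ring \<Rightarrow> ('r, 'a) module \<Rightarrow> bool" where
  "finite_udim R M \<longleftrightarrow> \<not> (\<exists>K :: nat \<Rightarrow> 'a set.
     (\<forall>i. lsubmodule R M (K i) \<and> K i \<noteq> {zero M}) \<and>
     (\<forall>i. K i \<inter> lspan R M (\<Union>j\<in>UNIV - {i}. K j) = {zero M}))"

definition weakly_isolated_in :: "'a topology \<Rightarrow> 'a \<Rightarrow> 'a set \<Rightarrow> bool" where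
  "weakly_isolated_in T x F \<longleftrightarrow> x \<in> F \<and>
     (\<exists>U. openin T U \<and> x \<in> U \<and> U \<inter> F \<subseteq> T closure_of {x})"

definition weakly_scattered :: "'a topology \<Rightarrow> bool" where
  "weakly_scattered T \<longleftrightarrow>
     (\<forall>F. closedin T F \<and> F \<noteq> {} \<longrightarrow> (\<exists>x\<in>F. weakly_isolated_in T x F))"

end

theory Submission
  imports Defs
begin

text \<open>A closed subset of \<open>LgSpec(M)\<close> has the form \<open>F = {P. N \<subseteq> P}\<close>. Say that a fully invariant
  submodule \<open>X\<close> meets \<open>F\<close> if its basic open set \<open>{P. X \<nsubseteq> P}\<close> does. If some \<open>X\<close> meeting \<open>F\<close>
  is irreducible, i.e. no two fully invariant submodules of \<open>X\<close> meeting \<open>F\<close> have disjoint basic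
  open sets on \<open>F\<close>, then the largest fully invariant submodule contained in every \<open>P \<in> F\<close> with
  \<open>X \<nsubseteq> P\<close> is itself a point of \<open>F\<close>, and it is weakly isolated in \<open>F\<close> by the basic open set of \<open>X\<close>.
  Otherwise every \<open>X\<close> meeting \<open>F\<close> splits into two such submodules with disjoint basic open sets,
  and splitting repeatedly gives \<open>K\<^sub>0, K\<^sub>1, \<dots>\<close> with pairwise disjoint basic open sets on \<open>F\<close>.
  Modulo the largest fully invariant submodule \<open>S\<close> contained in all of \<open>F\<close> the \<open>K\<^sub>i\<close> form an
  infinite independent family of nonzero submodules, so \<open>M/S\<close> has infinite uniform dimension.\<close>

lemma splitting_sequence:
  fixes good :: "'x::order \<Rightarrow> bool"
  assumes "good U"
    and split: "\<And>X. good X \<Longrightarrow> \<exists>A B. good A \<and> good B \<and> A \<le> X \<and> B \<le> X \<and> sep A B"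
    and sep_antimono: "\<And>A B B'. sep A B \<Longrightarrow> B' \<le> B \<Longrightarrow> sep A B'"
  obtains K :: "nat \<Rightarrow> 'x" where "\<And>i. good (K i)" and "\<And>i j. i < j \<Longrightarrow> sep (K i) (K j)"
proof -
  have "\<forall>X. \<exists>p. good X \<longrightarrow> good (fst p) \<and> good (snd p) \<and> fst p \<le> X \<and> snd p \<le> X \<and> sep (fst p) (snd p)"
    using split by force
  then obtain s where s: "\<And>X. good X \<Longrightarrow>
      good (fst (s X)) \<and> good (snd (s X)) \<and> fst (s X) \<le> X \<and> snd (s X) \<le> X \<and> sep (fst (s X)) (snd (s X))"
    by (rule choice[THEN exE]) blast
  define Y where "Y n = ((snd \<circ> s) ^^ n) U" for n
  have Y_Suc: "Y (Suc n) = snd (s (Y n))" for n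
    by (simp add: Y_def)
  have good_Y: "good (Y n)" for n
    by (induction n) (use \<open>good U\<close> s in \<open>simp_all add: Y_Suc, simp add: Y_def\<close>)
  have "decseq Y"
    using s[OF good_Y] by (intro decseq_SucI) (simp add: Y_Suc)
  show thesis
  proof (rule that[of "\<lambda>i. fst (s (Y i))"])
    show "good (fst (s (Y i)))" for i
      using s[OF good_Y] by blast
    show "sep (fst (s (Y i))) (fst (s (Y j)))" if "i < j" for i j
    proof -
      have "fst (s (Y j)) \<le> Y (Suc i)"
        using s[OF good_Y, of j] decseqD[OF \<open>decseq Y\<close>, of "Suc i" j] that by (meson Suc_leI order_trans)
      then show ?thesis
        using s[OF good_Y, of i] sep_antimono unfolding Y_Suc by blast
    qed
  qed
qed

locale left_module =
  fixes R :: "'r ring" and M :: "('r, 'a) module"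
  assumes lmodule: "lmodule R M"
begin

sublocale abelian_group M
  using lmodule by (simp add: lmodule_def)

lemma smult_closed: "r \<in> carrier R \<Longrightarrow> x \<in> carrier M \<Longrightarrow> smult M r x \<in> carrier M"
  using lmodule by (simp add: lmodule_def)

lemma smult_add_right: "r \<in> carrier R \<Longrightarrow> x \<in> carrier M \<Longrightarrow> y \<in> carrier M \<Longrightarrow>
    smult M r (x \<oplus>\<^bsub>M\<^esub> y) = smult M r x \<oplus>\<^bsub>M\<^esub> smult M r y"
  using lmodule by (simp add: lmodule_def)

lemma lhom_closed: "f \<in> lhom R M M \<Longrightarrow> x \<in> carrier M \<Longrightarrow> f x \<in> carrier M"
  by (simp add: lhom_def)

lemma lhom_add: "f \<in> lhom R M M \<Longrightarrow> x \<in> carrier M \<Longrightarrow> y \<in> carrier M \<Longrightarrow>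
    f (x \<oplus>\<^bsub>M\<^esub> y) = f x \<oplus>\<^bsub>M\<^esub> f y"
  by (simp add: lhom_def)

lemma lhom_smult: "f \<in> lhom R M M \<Longrightarrow> r \<in> carrier R \<Longrightarrow> x \<in> carrier M \<Longrightarrow>
    f (smult M r x) = smult M r (f x)"
  by (simp add: lhom_def)

lemma lhom_zero: "f \<in> lhom R M M \<Longrightarrow> f \<zero>\<^bsub>M\<^esub> = \<zero>\<^bsub>M\<^esub>"
  using lhom_add[of f "\<zero>\<^bsub>M\<^esub>" "\<zero>\<^bsub>M\<^esub>"] lhom_closed[of f "\<zero>\<^bsub>M\<^esub>"] by simp

lemma lhom_a_inv:
  assumes "f \<in> lhom R M M" "x \<in> carrier M"
  shows "f (\<ominus>\<^bsub>M\<^esub> x) = \<ominus>\<^bsub>M\<^esub> f x"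
proof -
  have "f (\<ominus>\<^bsub>M\<^esub> x) \<oplus>\<^bsub>M\<^esub> f x = \<zero>\<^bsub>M\<^esub>"
    using assms lhom_add[of f "\<ominus>\<^bsub>M\<^esub> x" x] by (simp add: l_neg lhom_zero)
  then show ?thesis
    using assms by (simp add: lhom_closed minus_equality)
qed

lemma lhom_id: "(\<lambda>x. x) \<in> lhom R M M"
  by (simp add: lhom_def)

lemma lhom_comp: "f \<in> lhom R M M \<Longrightarrow> g \<in> lhom R M M \<Longrightarrow> (\<lambda>x. g (f x)) \<in> lhom R M M"
  by (simp add: lhom_def)

lemma lsubmodule_carrier: "lsubmodule R M (carrier M)"
  by (auto simp: lsubmodule_def smult_closed)

lemma fully_invariant_carrier: "fully_invariant R M (carrier M)"
  by (auto simp: fully_invariant_def lsubmodule_carrier lhom_closed)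

lemma fully_invariant_Int:
  assumes "fully_invariant R M X" "fully_invariant R M Y"
  shows "fully_invariant R M (X \<inter> Y)"
  using assms unfolding fully_invariant_def lsubmodule_def by (auto simp add: image_subset_iff)

text \<open>For a set \<open>W\<close> of submodules, \<open>fi_core W\<close> is the largest fully invariant submodule
  contained in every member of \<open>W\<close>.\<close>

definition fi_core :: "'a set set \<Rightarrow> 'a set" where
  "fi_core W = {z \<in> carrier M. \<forall>P\<in>W. \<forall>f\<in>lhom R M M. f z \<in> P}"

lemma fully_invariant_fi_core:
  assumes W: "\<And>P. P \<in> W \<Longrightarrow> lsubmodule R M P"
  shows "fully_invariant R M (fi_core W)"
  unfolding fully_invariant_def lsubmodule_def
proof (intro conjI ballI)
  show "fi_core W \<subseteq> carrier M" "\<zero>\<^bsub>M\<^esub> \<in> fi_core W"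
    using W by (auto simp: fi_core_def lhom_zero lsubmodule_def)
  show "x \<oplus>\<^bsub>M\<^esub> y \<in> fi_core W" if "x \<in> fi_core W" "y \<in> fi_core W" for x y
    using that W by (auto simp: fi_core_def lhom_add lsubmodule_def)
  show "\<ominus>\<^bsub>M\<^esub> x \<in> fi_core W" if "x \<in> fi_core W" for x
    using that W by (auto simp: fi_core_def lhom_a_inv lsubmodule_def)
  show "smult M r x \<in> fi_core W" if "r \<in> carrier R" "x \<in> fi_core W" for r x
    using that W by (auto simp: fi_core_def lhom_smult smult_closed lsubmodule_def)
  show "f ` fi_core W \<subseteq> fi_core W" if "f \<in> lhom R M M" for f
  proof
    fix y assume "y \<in> f ` fi_core W"
    then obtain z where z: "z \<in> fi_core W" "y = f z" by blast
    show "y \<in> fi_core W" unfolding fi_core_def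
    proof (intro CollectI conjI ballI)
      show "y \<in> carrier M"
        using z that by (auto simp: fi_core_def lhom_closed)
      fix P g assume "P \<in> W" "g \<in> lhom R M M"
      then show "g y \<in> P"
        using z lhom_comp[OF that, of g] by (auto simp: fi_core_def)
    qed
  qed
qed

lemma fi_core_subset: "P \<in> W \<Longrightarrow> fi_core W \<subseteq> P"
  using lhom_id by (auto simp: fi_core_def)

lemma fully_invariant_subset_fi_core:
  "fully_invariant R M X \<Longrightarrow> (\<And>P. P \<in> W \<Longrightarrow> X \<subseteq> P) \<Longrightarrow> X \<subseteq> fi_core W"
  unfolding fi_core_def fully_invariant_def lsubmodule_def by blast

lemma NML_subset_Int:
  assumes X: "fully_invariant R M X" and Y: "lsubmodule R M Y"
  shows "NML R M X Y \<subseteq> X \<inter> Y"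
proof -
  have "f ` X \<subseteq> X \<inter> Y" if f: "f \<in> lhom R M (M\<lparr>carrier := Y\<rparr>)" for f
  proof -
    have "f \<in> lhom R M M"
      using f Y by (auto simp: lhom_def lsubmodule_def)
    then show ?thesis
      using f X by (auto simp: lhom_def fully_invariant_def lsubmodule_def)
  qed
  moreover have "lsubmodule R M (X \<inter> Y)"
    using X Y by (auto simp: fully_invariant_def lsubmodule_def)
  ultimately show ?thesis
    unfolding NML_def lspan_def by blast
qed

lemma lsubmodule_LgSpec: "P \<in> LgSpec R M \<Longrightarrow> lsubmodule R M P"
  by (simp add: LgSpec_def)

lemma LgSpec_Int_prime:
  assumes "P \<in> LgSpec R M" "fully_invariant R M X" "fully_invariant R M Y" "X \<inter> Y \<subseteq> P"
  shows "X \<subseteq> P \<or> Y \<subseteq> P"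
proof -
  have "NML R M X Y \<subseteq> P"
    using NML_subset_Int[OF assms(2)] assms(3,4) by (auto simp: fully_invariant_def)
  then show ?thesis
    using assms unfolding LgSpec_def by blast
qed

lemma LgSpec_not_carrier_subset: "P \<in> LgSpec R M \<Longrightarrow> \<not> carrier M \<subseteq> P"
  by (auto simp: LgSpec_def lsubmodule_def)

abbreviation basic_open :: "'a set \<Rightarrow> 'a set set" where
  "basic_open N \<equiv> {P \<in> LgSpec R M. \<not> N \<subseteq> P}"

lemma istopology_basic_opens: "istopology (\<lambda>U. \<exists>N. fully_invariant R M N \<and> U = basic_open N)"
  unfolding istopology_def
proof (intro conjI allI impI)
  fix U V
  assume "\<exists>N. fully_invariant R M N \<and> U = basic_open N" "\<exists>N. fully_invariant R M N \<and> V = basic_open N"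
  then obtain X Y where X: "fully_invariant R M X" "U = basic_open X"
    and Y: "fully_invariant R M Y" "V = basic_open Y"
    by blast
  have "U \<inter> V = basic_open (X \<inter> Y)"
    using X Y LgSpec_Int_prime[of _ X Y] by auto
  then show "\<exists>N. fully_invariant R M N \<and> U \<inter> V = basic_open N"
    using fully_invariant_Int[OF X(1) Y(1)] by blast
next
  fix \<U> assume \<U>: "\<forall>U\<in>\<U>. \<exists>N. fully_invariant R M N \<and> U = basic_open N"
  define Z where "Z = fi_core (LgSpec R M - \<Union>\<U>)"
  have "\<Union>\<U> = basic_open Z"
  proof (intro equalityI subsetI)
    fix P assume "P \<in> \<Union>\<U>"
    then obtain U where U: "U \<in> \<U>" "P \<in> U"
      by blast
    then obtain X where X: "fully_invariant R M X" "U = basic_open X"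
      using \<U> by blast
    have "X \<subseteq> Z"
      unfolding Z_def
    proof (rule fully_invariant_subset_fi_core[OF X(1)])
      fix Q assume "Q \<in> LgSpec R M - \<Union>\<U>"
      then show "X \<subseteq> Q"
        using U X(2) by blast
    qed
    then show "P \<in> basic_open Z"
      using U X by auto
  next
    fix P assume "P \<in> basic_open Z"
    then show "P \<in> \<Union>\<U>"
      using fi_core_subset[of P "LgSpec R M - \<Union>\<U>"] unfolding Z_def by blast
  qed
  moreover have "fully_invariant R M Z"
    unfolding Z_def by (rule fully_invariant_fi_core) (auto simp: lsubmodule_LgSpec)
  ultimately show "\<exists>N. fully_invariant R M N \<and> \<Union>\<U> = basic_open N"
    by blast
qed

lemma openin_LgSpec_top:
  "openin (LgSpec_top R M) U \<longleftrightarrow> (\<exists>N. fully_invariant R M N \<and> U = basic_open N)"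
  unfolding LgSpec_top_def using istopology_basic_opens by simp

lemma topspace_LgSpec_top: "topspace (LgSpec_top R M) = LgSpec R M"
proof -
  have "openin (LgSpec_top R M) (LgSpec R M)"
    unfolding openin_LgSpec_top using fully_invariant_carrier LgSpec_not_carrier_subset by blast
  then show ?thesis
    unfolding topspace_def openin_LgSpec_top by blast
qed

lemma closedin_LgSpec_top:
  assumes "closedin (LgSpec_top R M) F"
  obtains N where "fully_invariant R M N" "F = {P \<in> LgSpec R M. N \<subseteq> P}"
proof -
  obtain N where "fully_invariant R M N" "LgSpec R M - F = basic_open N"
    using assms unfolding closedin_def topspace_LgSpec_top openin_LgSpec_top by blast
  moreover have "F \<subseteq> LgSpec R M"
    using assms unfolding closedin_def topspace_LgSpec_top by blast
  ultimately have "F = {P \<in> LgSpec R M. N \<subseteq> P}"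
    by blast
  with that \<open>fully_invariant R M N\<close> show thesis .
qed

lemma in_closure_of_LgSpec:
  assumes "C \<in> LgSpec R M" "Q \<in> LgSpec R M" "C \<subseteq> Q"
  shows "Q \<in> LgSpec_top R M closure_of {C}"
  using assms unfolding closure_of_def topspace_LgSpec_top openin_LgSpec_top by auto

lemma fi_core_LgSpec:
  assumes W: "W \<subseteq> LgSpec R M" "W \<noteq> {}"
    and irreducible: "\<And>A B. fully_invariant R M A \<Longrightarrow> fully_invariant R M B \<Longrightarrow>
      basic_open A \<inter> W \<noteq> {} \<Longrightarrow> basic_open B \<inter> W \<noteq> {} \<Longrightarrow> basic_open A \<inter> basic_open B \<inter> W \<noteq> {}"
  shows "fi_core W \<in> LgSpec R M"
proof -
  let ?C = "fi_core W"
  have C: "fully_invariant R M ?C"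
    using W(1) lsubmodule_LgSpec by (intro fully_invariant_fi_core) blast
  have "?C \<noteq> carrier M"
  proof
    obtain P where "P \<in> W" using W(2) by blast
    moreover assume "?C = carrier M"
    ultimately show False
      using fi_core_subset[of P W] LgSpec_not_carrier_subset W(1) by auto
  qed
  moreover have "A \<subseteq> ?C \<or> B \<subseteq> ?C"
    if A: "fully_invariant R M A" and B: "fully_invariant R M B" and AB: "NML R M A B \<subseteq> ?C" for A B
  proof (rule ccontr)
    assume "\<not> (A \<subseteq> ?C \<or> B \<subseteq> ?C)"
    then have "\<not> (\<forall>P\<in>W. A \<subseteq> P)" "\<not> (\<forall>P\<in>W. B \<subseteq> P)"
      using A B fully_invariant_subset_fi_core by blast+
    then have "basic_open A \<inter> W \<noteq> {}" "basic_open B \<inter> W \<noteq> {}"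
      using W(1) by auto
    then obtain Q where Q: "Q \<in> W" "\<not> A \<subseteq> Q" "\<not> B \<subseteq> Q"
      using irreducible[OF A B] by blast
    moreover have "NML R M A B \<subseteq> Q"
      using AB fi_core_subset[OF Q(1)] by blast
    moreover have "Q \<in> LgSpec R M"
      using W(1) Q(1) by blast
    ultimately show False
      using A B by (auto simp: LgSpec_def)
  qed
  ultimately show ?thesis
    using C by (auto simp: LgSpec_def fully_invariant_def)
qed

definition coset :: "'a set \<Rightarrow> 'a \<Rightarrow> 'a set" where
  "coset S a = {a \<oplus>\<^bsub>M\<^esub> n | n. n \<in> S}"

lemma coset_self: "lsubmodule R M S \<Longrightarrow> a \<in> carrier M \<Longrightarrow> a \<in> coset S a"
  unfolding coset_def lsubmodule_def by (auto intro!: exI[of _ "\<zero>\<^bsub>M\<^esub>"])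

lemma coset_eqD:
  assumes "lsubmodule R M S" "a \<in> carrier M" "coset S a = coset S b"
  obtains n where "n \<in> S" "a = b \<oplus>\<^bsub>M\<^esub> n"
proof -
  have "a \<in> coset S b"
    using coset_self[OF assms(1,2)] assms(3) by simp
  then show thesis
    using that unfolding coset_def by blast
qed

lemma coset_add_right:
  assumes S: "lsubmodule R M S" and b: "b \<in> carrier M" and n: "n \<in> S"
  shows "coset S (b \<oplus>\<^bsub>M\<^esub> n) = coset S b"
proof -
  have SM: "S \<subseteq> carrier M"
    using S by (simp add: lsubmodule_def)
  have nM: "n \<in> carrier M"
    using n SM by blast
  have "b \<oplus>\<^bsub>M\<^esub> n \<oplus>\<^bsub>M\<^esub> m = b \<oplus>\<^bsub>M\<^esub> (n \<oplus>\<^bsub>M\<^esub> m)" if "m \<in> S" for m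
    by (simp add: a_assoc b nM subsetD[OF SM that])
  moreover have "b \<oplus>\<^bsub>M\<^esub> k = b \<oplus>\<^bsub>M\<^esub> n \<oplus>\<^bsub>M\<^esub> (\<ominus>\<^bsub>M\<^esub> n \<oplus>\<^bsub>M\<^esub> k)" if "k \<in> S" for k
    by (simp add: a_assoc b nM subsetD[OF SM that] r_neg2)
  moreover have "n \<oplus>\<^bsub>M\<^esub> m \<in> S" "\<ominus>\<^bsub>M\<^esub> n \<oplus>\<^bsub>M\<^esub> m \<in> S" if "m \<in> S" for m
    using S n that by (simp_all add: lsubmodule_def)
  ultimately show ?thesis
    unfolding coset_def by blast
qed

lemma coset_zero:
  assumes "lsubmodule R M S"
  shows "coset S \<zero>\<^bsub>M\<^esub> = S"
proof -
  have "\<zero>\<^bsub>M\<^esub> \<oplus>\<^bsub>M\<^esub> n = n" if "n \<in> S" for n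
    using that assms by (auto simp: lsubmodule_def)
  then show ?thesis
    unfolding coset_def by (auto intro!: exI)
qed

lemma coset_eq_zero:
  assumes "lsubmodule R M S" "a \<in> S"
  shows "coset S a = S"
proof -
  have "a \<in> carrier M"
    using assms by (auto simp: lsubmodule_def)
  then show ?thesis
    using coset_add_right[OF assms(1) zero_closed assms(2)] coset_zero[OF assms(1)] by simp
qed

lemma carrier_quot_mod: "carrier (quot_mod R M S) = coset S ` carrier M"
  unfolding quot_mod_def coset_def by auto

lemma zero_quot_mod: "zero (quot_mod R M S) = S"
  unfolding quot_mod_def by simp

lemma add_quot_mod:
  assumes S: "lsubmodule R M S" and a: "a \<in> carrier M" and b: "b \<in> carrier M"
  shows "add (quot_mod R M S) (coset S a) (coset S b) = coset S (a \<oplus>\<^bsub>M\<^esub> b)"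
proof -
  have SM: "S \<subseteq> carrier M"
    using S by (simp add: lsubmodule_def)
  have "{x \<oplus>\<^bsub>M\<^esub> y | x y. x \<in> coset S a \<and> y \<in> coset S b} = coset S (a \<oplus>\<^bsub>M\<^esub> b)"
  proof (intro equalityI subsetI)
    fix z assume "z \<in> {x \<oplus>\<^bsub>M\<^esub> y | x y. x \<in> coset S a \<and> y \<in> coset S b}"
    then obtain n m where nm: "n \<in> S" "m \<in> S" "z = (a \<oplus>\<^bsub>M\<^esub> n) \<oplus>\<^bsub>M\<^esub> (b \<oplus>\<^bsub>M\<^esub> m)"
      unfolding coset_def by blast
    moreover have "n \<in> carrier M" "m \<in> carrier M"
      using nm SM by blast+
    ultimately have "z = (a \<oplus>\<^bsub>M\<^esub> b) \<oplus>\<^bsub>M\<^esub> (n \<oplus>\<^bsub>M\<^esub> m)"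
      using a b by (simp add: a_ac)
    moreover have "n \<oplus>\<^bsub>M\<^esub> m \<in> S"
      using S nm by (simp add: lsubmodule_def)
    ultimately show "z \<in> coset S (a \<oplus>\<^bsub>M\<^esub> b)"
      unfolding coset_def by blast
  next
    fix z assume "z \<in> coset S (a \<oplus>\<^bsub>M\<^esub> b)"
    then obtain k where k: "k \<in> S" "z = (a \<oplus>\<^bsub>M\<^esub> b) \<oplus>\<^bsub>M\<^esub> k"
      unfolding coset_def by blast
    moreover have "k \<in> carrier M"
      using k SM by blast
    ultimately have "z = (a \<oplus>\<^bsub>M\<^esub> k) \<oplus>\<^bsub>M\<^esub> (b \<oplus>\<^bsub>M\<^esub> \<zero>\<^bsub>M\<^esub>)"
      using a b by (simp add: a_ac)
    moreover have "a \<oplus>\<^bsub>M\<^esub> k \<in> coset S a" "b \<oplus>\<^bsub>M\<^esub> \<zero>\<^bsub>M\<^esub> \<in> coset S b"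
      using k S unfolding coset_def lsubmodule_def by blast+
    ultimately show "z \<in> {x \<oplus>\<^bsub>M\<^esub> y | x y. x \<in> coset S a \<and> y \<in> coset S b}"
      by blast
  qed
  then show ?thesis
    unfolding quot_mod_def by simp
qed

lemma smult_quot_mod:
  assumes S: "lsubmodule R M S" and r: "r \<in> carrier R" and a: "a \<in> carrier M"
  shows "smult (quot_mod R M S) r (coset S a) = coset S (smult M r a)"
proof -
  have SM: "S \<subseteq> carrier M"
    using S by (simp add: lsubmodule_def)
  have "{smult M r x \<oplus>\<^bsub>M\<^esub> n | x n. x \<in> coset S a \<and> n \<in> S} = coset S (smult M r a)"
  proof (intro equalityI subsetI)
    fix z assume "z \<in> {smult M r x \<oplus>\<^bsub>M\<^esub> n | x n. x \<in> coset S a \<and> n \<in> S}"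
    then obtain n m where nm: "n \<in> S" "m \<in> S" "z = smult M r (a \<oplus>\<^bsub>M\<^esub> m) \<oplus>\<^bsub>M\<^esub> n"
      unfolding coset_def by blast
    moreover have "n \<in> carrier M" "m \<in> carrier M"
      using nm SM by blast+
    ultimately have "z = smult M r a \<oplus>\<^bsub>M\<^esub> (smult M r m \<oplus>\<^bsub>M\<^esub> n)"
      using a r by (simp add: smult_add_right smult_closed a_assoc)
    moreover have "smult M r m \<oplus>\<^bsub>M\<^esub> n \<in> S"
      using S nm r by (simp add: lsubmodule_def)
    ultimately show "z \<in> coset S (smult M r a)"
      unfolding coset_def by blast
  next
    fix z assume "z \<in> coset S (smult M r a)"
    then obtain k where k: "k \<in> S" "z = smult M r (a \<oplus>\<^bsub>M\<^esub> \<zero>\<^bsub>M\<^esub>) \<oplus>\<^bsub>M\<^esub> k"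
      using a unfolding coset_def by auto
    moreover have "a \<oplus>\<^bsub>M\<^esub> \<zero>\<^bsub>M\<^esub> \<in> coset S a"
      using S unfolding coset_def lsubmodule_def by blast
    ultimately show "z \<in> {smult M r x \<oplus>\<^bsub>M\<^esub> n | x n. x \<in> coset S a \<and> n \<in> S}"
      by blast
  qed
  then show ?thesis
    unfolding quot_mod_def by simp
qed

text \<open>The additive inverse of a record that is not known to be a group is a definite description,
  so it is computed by hand.\<close>

lemma a_inv_quot_mod:
  assumes S: "lsubmodule R M S" and a: "a \<in> carrier M"
  shows "a_inv (quot_mod R M S) (coset S a) = coset S (\<ominus>\<^bsub>M\<^esub> a)"
proof -
  let ?Q = "quot_mod R M S"
  have "(THE y. y \<in> carrier ?Q \<and> add ?Q (coset S a) y = zero ?Q \<and> add ?Q y (coset S a) = zero ?Q)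
      = coset S (\<ominus>\<^bsub>M\<^esub> a)"
  proof (rule the_equality)
    have "add ?Q (coset S a) (coset S (\<ominus>\<^bsub>M\<^esub> a)) = zero ?Q"
      using add_quot_mod[OF S a a_inv_closed[OF a]] by (simp add: r_neg a coset_zero[OF S] zero_quot_mod)
    moreover have "add ?Q (coset S (\<ominus>\<^bsub>M\<^esub> a)) (coset S a) = zero ?Q"
      using add_quot_mod[OF S a_inv_closed[OF a] a] by (simp add: l_neg a coset_zero[OF S] zero_quot_mod)
    moreover have "coset S (\<ominus>\<^bsub>M\<^esub> a) \<in> carrier ?Q"
      using a by (simp add: carrier_quot_mod)
    ultimately show "coset S (\<ominus>\<^bsub>M\<^esub> a) \<in> carrier ?Q \<and> add ?Q (coset S a) (coset S (\<ominus>\<^bsub>M\<^esub> a)) = zero ?Q \<and>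
        add ?Q (coset S (\<ominus>\<^bsub>M\<^esub> a)) (coset S a) = zero ?Q"
      by blast
  next
    fix y assume y: "y \<in> carrier ?Q \<and> add ?Q (coset S a) y = zero ?Q \<and> add ?Q y (coset S a) = zero ?Q"
    then obtain b where b: "b \<in> carrier M" "y = coset S b"
      by (auto simp: carrier_quot_mod)
    then have "coset S (a \<oplus>\<^bsub>M\<^esub> b) = coset S \<zero>\<^bsub>M\<^esub>"
      using y a by (simp add: add_quot_mod[OF S] zero_quot_mod coset_zero[OF S])
    then obtain n where n: "n \<in> S" "a \<oplus>\<^bsub>M\<^esub> b = \<zero>\<^bsub>M\<^esub> \<oplus>\<^bsub>M\<^esub> n"
      by (rule coset_eqD[OF S a_closed[OF a b(1)]])
    moreover have "n \<in> carrier M"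
      using n S by (auto simp: lsubmodule_def)
    ultimately have "b = \<ominus>\<^bsub>M\<^esub> a \<oplus>\<^bsub>M\<^esub> n"
      using a b r_neg1[of a b] by simp
    then show "y = coset S (\<ominus>\<^bsub>M\<^esub> a)"
      using b coset_add_right[OF S _ n(1), of "\<ominus>\<^bsub>M\<^esub> a"] a by simp
  qed
  then show ?thesis
    unfolding a_inv_def m_inv_def by simp
qed

lemma lsubmodule_coset_image:
  assumes S: "lsubmodule R M S" and X: "lsubmodule R M X"
  shows "lsubmodule R (quot_mod R M S) (coset S ` X)"
proof -
  have XM: "X \<subseteq> carrier M"
    using X by (simp add: lsubmodule_def)
  show ?thesis
    unfolding lsubmodule_def
  proof (intro conjI ballI)
    show "coset S ` X \<subseteq> carrier (quot_mod R M S)"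
      using XM unfolding carrier_quot_mod by blast
    have "\<zero>\<^bsub>M\<^esub> \<in> X"
      using X by (simp add: lsubmodule_def)
    then show "zero (quot_mod R M S) \<in> coset S ` X"
      unfolding zero_quot_mod by (rule image_eqI[rotated]) (simp add: coset_zero[OF S])
    show "add (quot_mod R M S) x y \<in> coset S ` X" if xy: "x \<in> coset S ` X" "y \<in> coset S ` X" for x y
    proof -
      obtain a b where "a \<in> X" "b \<in> X" "x = coset S a" "y = coset S b"
        using xy by blast
      moreover have "a \<oplus>\<^bsub>M\<^esub> b \<in> X"
        using X calculation by (simp add: lsubmodule_def)
      ultimately show ?thesis
        using XM add_quot_mod[OF S, of a b] by blast
    qed
    show "a_inv (quot_mod R M S) x \<in> coset S ` X" if xy: "x \<in> coset S ` X" for x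
    proof -
      obtain a where "a \<in> X" "x = coset S a"
        using xy by blast
      moreover have "\<ominus>\<^bsub>M\<^esub> a \<in> X"
        using X calculation by (simp add: lsubmodule_def)
      ultimately show ?thesis
        using XM a_inv_quot_mod[OF S, of a] by blast
    qed
    show "smult (quot_mod R M S) r x \<in> coset S ` X" if r: "r \<in> carrier R" and xy: "x \<in> coset S ` X" for r x
    proof -
      obtain a where "a \<in> X" "x = coset S a"
        using xy by blast
      moreover have "smult M r a \<in> X"
        using X calculation r by (simp add: lsubmodule_def)
      ultimately show ?thesis
        using XM smult_quot_mod[OF S r, of a] by blast
    qed
  qed
qed

lemma quot_mod_not_finite_udim:
  fixes K T :: "nat \<Rightarrow> 'a set"
  assumes S: "lsubmodule R M S"
    and K: "\<And>i. lsubmodule R M (K i)" and T: "\<And>i. lsubmodule R M (T i)"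
    and K_not_S: "\<And>i. \<not> K i \<subseteq> S"
    and K_T: "\<And>i j. j \<noteq> i \<Longrightarrow> K j \<subseteq> T i"
    and K_T_S: "\<And>i a b n. a \<in> K i \<Longrightarrow> b \<in> T i \<Longrightarrow> n \<in> S \<Longrightarrow> a = b \<oplus>\<^bsub>M\<^esub> n \<Longrightarrow> a \<in> S"
  shows "\<not> finite_udim R (quot_mod R M S)"
proof -
  let ?Q = "quot_mod R M S"
  define Kq where "Kq i = coset S ` K i" for i
  have KM: "K i \<subseteq> carrier M" "T i \<subseteq> carrier M" for i
    using K T by (simp_all add: lsubmodule_def)
  have "lsubmodule R ?Q (Kq i)" for i
    unfolding Kq_def by (rule lsubmodule_coset_image[OF S K])
  moreover have "Kq i \<noteq> {zero ?Q}" for i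
  proof
    assume Kq_i: "Kq i = {zero ?Q}"
    obtain a where a: "a \<in> K i" "a \<notin> S"
      using K_not_S by blast
    then have "coset S a = S"
      using Kq_i by (auto simp: Kq_def zero_quot_mod)
    then show False
      using coset_self[OF S] a KM by blast
  qed
  moreover have "Kq i \<inter> lspan R ?Q (\<Union>j\<in>UNIV - {i}. Kq j) = {zero ?Q}" for i
  proof (intro equalityI subsetI)
    fix x assume x: "x \<in> Kq i \<inter> lspan R ?Q (\<Union>j\<in>UNIV - {i}. Kq j)"
    have "(\<Union>j\<in>UNIV - {i}. Kq j) \<subseteq> coset S ` T i"
      using K_T unfolding Kq_def by blast
    then have "lspan R ?Q (\<Union>j\<in>UNIV - {i}. Kq j) \<subseteq> coset S ` T i"
      unfolding lspan_def using lsubmodule_coset_image[OF S T] by (intro Inter_lower) blast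
    then have "x \<in> coset S ` K i" "x \<in> coset S ` T i"
      using x unfolding Kq_def by blast+
    then obtain a b where a: "a \<in> K i" "x = coset S a" and b: "b \<in> T i" "x = coset S b"
      by blast
    moreover have "a \<in> carrier M"
      using a KM by blast
    ultimately obtain n where "n \<in> S" "a = b \<oplus>\<^bsub>M\<^esub> n"
      using coset_eqD[OF S] by metis
    then have "a \<in> S"
      using K_T_S a b by blast
    then show "x \<in> {zero ?Q}"
      using a coset_eq_zero[OF S] by (simp add: zero_quot_mod)
  next
    fix x assume "x \<in> {zero ?Q}"
    then have x: "x = coset S \<zero>\<^bsub>M\<^esub>"
      by (simp add: zero_quot_mod coset_zero[OF S])
    have "\<zero>\<^bsub>M\<^esub> \<in> K i"
      using K by (simp add: lsubmodule_def)
    then have "x \<in> Kq i"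
      unfolding Kq_def x by (rule imageI)
    moreover have "x \<in> lspan R ?Q (\<Union>j\<in>UNIV - {i}. Kq j)"
      using x unfolding lspan_def lsubmodule_def by (simp add: coset_zero[OF S] zero_quot_mod)
    ultimately show "x \<in> Kq i \<inter> lspan R ?Q (\<Union>j\<in>UNIV - {i}. Kq j)"
      by blast
  qed
  ultimately show ?thesis
    unfolding finite_udim_def not_not by (intro exI[of _ Kq]) blast
qed

definition meets_basic_open :: "'a set set \<Rightarrow> 'a set \<Rightarrow> bool" where
  "meets_basic_open F X \<longleftrightarrow> fully_invariant R M X \<and> basic_open X \<inter> F \<noteq> {}"

definition basic_opens_disjoint_on :: "'a set set \<Rightarrow> 'a set \<Rightarrow> 'a set \<Rightarrow> bool" where
  "basic_opens_disjoint_on F A B \<longleftrightarrow> basic_open A \<inter> basic_open B \<inter> F = {}"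

lemma basic_opens_disjoint_on_commute:
  "basic_opens_disjoint_on F A B \<longleftrightarrow> basic_opens_disjoint_on F B A"
  by (auto simp: basic_opens_disjoint_on_def)

lemma basic_opens_disjoint_on_antimono:
  "basic_opens_disjoint_on F A B \<Longrightarrow> B' \<subseteq> B \<Longrightarrow> basic_opens_disjoint_on F A B'"
  unfolding basic_opens_disjoint_on_def by blast

lemma meets_basic_open_Int:
  assumes A: "fully_invariant R M A" and B: "fully_invariant R M B"
    and AB: "basic_open A \<inter> basic_open B \<inter> F \<noteq> {}"
  shows "meets_basic_open F (A \<inter> B)"
proof -
  obtain P where "P \<in> F" "P \<in> basic_open A" "P \<in> basic_open B"
    using AB by blast
  then have "P \<in> basic_open (A \<inter> B) \<inter> F"
    using LgSpec_Int_prime[of P A B] A B by blast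
  then show ?thesis
    using A B by (auto simp: meets_basic_open_def fully_invariant_Int)
qed

lemma not_finite_udim_if_basic_opens_disjoint:
  fixes K :: "nat \<Rightarrow> 'a set"
  assumes F: "F \<subseteq> LgSpec R M"
    and K: "\<And>i. meets_basic_open F (K i)"
    and disjoint: "\<And>i j. i \<noteq> j \<Longrightarrow> basic_opens_disjoint_on F (K i) (K j)"
  shows "\<not> finite_udim R (quot_mod R M (fi_core F))"
proof -
  define T where "T i = fi_core {P \<in> F. \<forall>j. j \<noteq> i \<longrightarrow> K j \<subseteq> P}" for i
  have F_lsubmodule: "lsubmodule R M P" if "P \<in> F" for P
    using that F lsubmodule_LgSpec by blast
  have K_fi: "fully_invariant R M (K i)" for i
    using K by (simp add: meets_basic_open_def)
  have K_other: "K j \<subseteq> P" if "P \<in> F" "\<not> K i \<subseteq> P" "j \<noteq> i" for P i j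
    using disjoint[OF that(3)] that F by (auto simp: basic_opens_disjoint_on_def)
  show ?thesis
  proof (rule quot_mod_not_finite_udim[where T = T])
    show "lsubmodule R M (fi_core F)"
      using fully_invariant_fi_core[OF F_lsubmodule] by (simp add: fully_invariant_def)
    show "lsubmodule R M (K i)" for i
      using K_fi by (simp add: fully_invariant_def)
    show "lsubmodule R M (T i)" for i
      using fully_invariant_fi_core[of "{P \<in> F. \<forall>j. j \<noteq> i \<longrightarrow> K j \<subseteq> P}"] F_lsubmodule
      unfolding T_def by (simp add: fully_invariant_def)
    show "\<not> K i \<subseteq> fi_core F" for i
      using K fi_core_subset[of _ F] by (auto simp: meets_basic_open_def)
    show "K j \<subseteq> T i" if "j \<noteq> i" for i j
      unfolding T_def using that by (intro fully_invariant_subset_fi_core K_fi) auto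
    show "a \<in> fi_core F"
      if a: "a \<in> K i" and b: "b \<in> T i" and n: "n \<in> fi_core F" and a_eq: "a = b \<oplus>\<^bsub>M\<^esub> n" for i a b n
      unfolding fi_core_def
    proof (intro CollectI conjI ballI)
      have "b \<in> carrier M" "n \<in> carrier M"
        using b n by (auto simp: T_def fi_core_def)
      then show "a \<in> carrier M"
        using a_eq by simp
      fix P f assume P: "P \<in> F" and f: "f \<in> lhom R M M"
      show "f a \<in> P"
      proof (cases "K i \<subseteq> P")
        case True
        then show ?thesis
          using K_fi[of i] f a unfolding fully_invariant_def by blast
      next
        case False
        then have "f b \<in> P"
          using b P f K_other unfolding T_def fi_core_def by blast
        moreover have "f n \<in> P"
          using n P f unfolding fi_core_def by blast
        ultimately show ?thesis
          using a_eq lhom_add[OF f \<open>b \<in> carrier M\<close> \<open>n \<in> carrier M\<close>] F_lsubmodule[OF P]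
          by (simp add: lsubmodule_def)
      qed
    qed
  qed
qed

lemma weakly_isolated_fi_core:
  assumes F: "F = {P \<in> LgSpec R M. N \<subseteq> P}" and N: "fully_invariant R M N"
    and X: "meets_basic_open F X"
    and irreducible: "\<And>A B. meets_basic_open F A \<Longrightarrow> meets_basic_open F B \<Longrightarrow> A \<subseteq> X \<Longrightarrow> B \<subseteq> X \<Longrightarrow>
      \<not> basic_opens_disjoint_on F A B"
  shows "weakly_isolated_in (LgSpec_top R M) (fi_core (basic_open X \<inter> F)) F"
proof -
  let ?W = "basic_open X \<inter> F"
  let ?C = "fi_core ?W"
  have X_fi: "fully_invariant R M X"
    using X by (simp add: meets_basic_open_def)
  have W: "?W \<subseteq> LgSpec R M" "?W \<noteq> {}"
    using X by (auto simp: meets_basic_open_def)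
  have C_LgSpec: "?C \<in> LgSpec R M"
  proof (rule fi_core_LgSpec[OF W])
    fix A B
    assume A: "fully_invariant R M A" and B: "fully_invariant R M B"
      and "basic_open A \<inter> ?W \<noteq> {}" "basic_open B \<inter> ?W \<noteq> {}"
    then have "meets_basic_open F (A \<inter> X)" "meets_basic_open F (B \<inter> X)"
      using meets_basic_open_Int[OF A X_fi] meets_basic_open_Int[OF B X_fi] by (simp_all add: Int_assoc)
    then have "\<not> basic_opens_disjoint_on F (A \<inter> X) (B \<inter> X)"
      using irreducible by blast
    then show "basic_open A \<inter> basic_open B \<inter> ?W \<noteq> {}"
      by (auto simp: basic_opens_disjoint_on_def)
  qed
  have "N \<subseteq> ?C"
    using F by (intro fully_invariant_subset_fi_core N) auto
  then have C_F: "?C \<in> F"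
    using C_LgSpec F by blast
  have "\<not> X \<subseteq> ?C"
    using W(2) fi_core_subset[of _ ?W] by blast
  moreover have "?W \<subseteq> LgSpec_top R M closure_of {?C}"
    using in_closure_of_LgSpec[OF C_LgSpec] fi_core_subset[of _ ?W] by blast
  ultimately show ?thesis
    unfolding weakly_isolated_in_def openin_LgSpec_top using C_F C_LgSpec X_fi by blast
qed

lemma exists_irreducible_basic_open:
  assumes F: "F \<subseteq> LgSpec R M" "F \<noteq> {}"
    and udim: "finite_udim R (quot_mod R M (fi_core F))"
  shows "\<exists>X. meets_basic_open F X \<and> (\<forall>A B. meets_basic_open F A \<longrightarrow> meets_basic_open F B \<longrightarrow>
    A \<subseteq> X \<longrightarrow> B \<subseteq> X \<longrightarrow> \<not> basic_opens_disjoint_on F A B)"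
proof (rule ccontr)
  assume "\<nexists>X. meets_basic_open F X \<and> (\<forall>A B. meets_basic_open F A \<longrightarrow> meets_basic_open F B \<longrightarrow>
    A \<subseteq> X \<longrightarrow> B \<subseteq> X \<longrightarrow> \<not> basic_opens_disjoint_on F A B)"
  then have split: "\<exists>A B. meets_basic_open F A \<and> meets_basic_open F B \<and> A \<subseteq> X \<and> B \<subseteq> X \<and>
      basic_opens_disjoint_on F A B" if "meets_basic_open F X" for X
    using that by blast
  have carrier: "meets_basic_open F (carrier M)"
    using F fully_invariant_carrier LgSpec_not_carrier_subset by (auto simp: meets_basic_open_def)
  show False
  proof (rule splitting_sequence[OF carrier split basic_opens_disjoint_on_antimono])
    fix K :: "nat \<Rightarrow> 'a set"
    assume K: "\<And>i. meets_basic_open F (K i)"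
      and K_disjoint: "\<And>i j. i < j \<Longrightarrow> basic_opens_disjoint_on F (K i) (K j)"
    have "basic_opens_disjoint_on F (K i) (K j)" if "i \<noteq> j" for i j
      using that K_disjoint basic_opens_disjoint_on_commute by (metis linorder_neq_iff)
    then show False
      using not_finite_udim_if_basic_opens_disjoint[OF F(1) K] udim by blast
  qed
qed

end

theorem corollary4p33:
  fixes R :: "'r ring" and M :: "('r, 'a) module"
  assumes "ring R"
    and "lmodule R M"
    and "projective_in_sigma R M"
    and "\<forall>N. fully_invariant R M N \<longrightarrow> finite_udim R (quot_mod R M N)"
  shows "weakly_scattered (LgSpec_top R M)"
  unfolding weakly_scattered_def
proof (intro allI impI)
  interpret left_module R M
    using assms(2) by (rule left_module.intro)
  fix F assume "closedin (LgSpec_top R M) F \<and> F \<noteq> {}"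
  then obtain N where N: "fully_invariant R M N" and F: "F = {P \<in> LgSpec R M. N \<subseteq> P}" and "F \<noteq> {}"
    using closedin_LgSpec_top by metis
  have "fully_invariant R M (fi_core F)"
    using F by (intro fully_invariant_fi_core) (auto simp: lsubmodule_LgSpec)
  then have "finite_udim R (quot_mod R M (fi_core F))"
    using assms(4) by blast
  then obtain X where X: "meets_basic_open F X" and irreducible: "\<And>A B. meets_basic_open F A \<Longrightarrow>
      meets_basic_open F B \<Longrightarrow> A \<subseteq> X \<Longrightarrow> B \<subseteq> X \<Longrightarrow> \<not> basic_opens_disjoint_on F A B"
    using exists_irreducible_basic_open[of F] F \<open>F \<noteq> {}\<close> by blast
  have "weakly_isolated_in (LgSpec_top R M) (fi_core (basic_open X \<inter> F)) F"
    by (rule weakly_isolated_fi_core[OF F N X irreducible])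
  then show "\<exists>C\<in>F. weakly_isolated_in (LgSpec_top R M) C F"
    unfolding weakly_isolated_in_def by blast
qed

end
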